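(* Let $\mathcal{M}$ be a structural causal game with rational outcomes $\mathcal{R}(\mathcal{M})$, let $i$ be an agent, and let $Y=y$ be a fixed outcome of interest. For a pre-policy $\pi^{pre}$ of agent $i$, let $$f(\pi^{pre}) := P^{\mathcal{R}_{\mathcal{I}}}(Y=y)=\int_{\boldsymbol{\pi}\in\mathcal{R}(\mathcal{M}_{\mathcal{I}})} P(Y=y\mid \boldsymbol{\pi})\,P^{\mathcal{R}_{\mathcal{I}}}(\boldsymbol{\pi})\,d\boldsymbol{\pi}$$ denote the probability of observing $Y=y$ under the pre-policy intervention $\pi^{pre}$. Assume $f$ is upper semicontinuous and defined on a compact domain $\operatorname{dom}(\pi^{pre})\subseteq\mathbb{R}^N$. Then (i) there exists at least one pre-policy of agent $i$ that does not decrease the probability of $Y=y$, i.e. whose causal effect $\Delta_{\mathrm{CE}}(\pi^{pre},Y=y)\ge 0$; and (ii) there exists a pre-policy $\bar\pi\in\operatorname{dom}(\pi^{pre})$ that maximizes the causal effect, i.e. $\Delta_{\mathrm{CE}}(\bar\pi,Y=y)\ge \Delta_{\mathrm{CE}}(\pi^{pre},Y=y)$ for all $\pi^{pre}\in\operatorname{dom}(\pi^{pre})$.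
   Context: A structural causal game (SCG) $\mathcal{M}=(\mathcal{G},\boldsymbol{\theta})$ consists of a DAG $\mathcal{G}$ over a set of agents $N$, exogenous variables and endogenous variables partitioned into chance, decision and utility variables; each agent $i$ has a decision $D^i$ and a policy (decision rule) $\pi_{D^i}=P(D^i\mid \mathbf{Pa}_{D^i})$, which is the value of a policy variable $\Pi_{D^i}$; $\boldsymbol{\theta}$ gives conditional distributions of non-decision variables. A rationality relation $r_{D^i}\subseteq \operatorname{dom}(\mathbf{Pa}_{\Pi_{D^i}})\times\operatorname{dom}(\Pi_{D^i})$ specifies the admissible responses of $D^i$ to its parent context; the rational outcomes $\mathcal{R}(\mathcal{M})$ are the policy profiles $\boldsymbol{\pi}$ in which every agent's policy is a best response (so each is a Nash equilibrium), and $P^{\mathcal{R}}(\boldsymbol{\pi})$ is the distribution over these profiles. A pre-policy intervention on agent $i$'s policy variable $\Pi_{D^i}$ replaces its rationality relation by a fixed decision rule $\pi^{pre}$ (removing incoming edges to $\Pi_{D^i}$), which is observed by the children of $\Pi_{D^i}$; the resulting interventional rational outcomes are $\mathcal{R}(\mathcal{M}_{\mathcal{I}})$ with distribution $P^{\mathcal{R}_{\mathcal{I}}}(\boldsymbol{\pi})$. The empty intervention leaves the game unchanged. The causal effect of $\pi^{pre}$ on $Y=y$ is $$\Delta_{\mathrm{CE}}(\pi^{pre},Y=y)=\int_{\boldsymbol{\pi}\in\mathcal{R}(\mathcal{M}_{\mathcal{I}})}P(Y=y\mid\boldsymbol{\pi})P^{\mathcal{R}_{\mathcal{I}}}(\boldsymbol{\pi})\,d\boldsymbol{\pi}-\int_{\boldsymbol{\pi}\in\mathcal{R}(\mathcal{M})}P(Y=y\mid\boldsymbol{\pi})P^{\mathcal{R}}(\boldsymbol{\pi})\,d\boldsymbol{\pi}.$$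 *)

theory Defs
  imports "HOL-Probability.Probability"
begin

definition usc_on :: "'a::metric_space set \<Rightarrow> ('a \<Rightarrow> real) \<Rightarrow> bool" where
  "usc_on S f \<longleftrightarrow>
     (\<forall>x\<in>S. \<forall>e>0. \<exists>d>0. \<forall>y\<in>S. dist y x < d \<longrightarrow> f y < f x + e)"

text \<open>Interventions on agent i's policy variable are of type 'pre option:
  None = empty intervention (game unchanged), Some pi = pre-policy pi.
  Rset I   : the set of (interventional) rational outcomes R(M_I) (policy profiles),
  PR I     : the distribution P^{R_I} over policy profiles,
  PY prof  : P(Y = y | prof).\<close>

definition prob_outcome ::
  "('pre option \<Rightarrow> 'prof set) \<Rightarrow> ('pre option \<Rightarrow> 'prof measure) \<Rightarrow> ('prof \<Rightarrow> real)
    \<Rightarrow> 'pre option \<Rightarrow> real" where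
  "prob_outcome Rset PR PY I = (LINT prof:Rset I|PR I. PY prof)"

definition causal_effect ::
  "('pre option \<Rightarrow> 'prof set) \<Rightarrow> ('pre option \<Rightarrow> 'prof measure) \<Rightarrow> ('prof \<Rightarrow> real)
    \<Rightarrow> 'pre option \<Rightarrow> real" where
  "causal_effect Rset PR PY I = prob_outcome Rset PR PY I - prob_outcome Rset PR PY None"

end

theory Submission
  imports Defs
begin

text \<open>The empty intervention has causal effect zero, which gives (i). The causal effect of a
  pre-policy differs from f only by the constant baseline term, so (ii) is the
  extreme value theorem for upper semicontinuous functions: strict sublevel sets are relatively
  open, and if no maximum existed the sets of points strictly below some point would cover the
  compact domain, yet the best of the finitely many points of a subcover lies in none of them.\<close>

lemma openin_strict_sublevel_if_usc_on:
  assumes "usc_on S f"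
  shows "openin (top_of_set S) {x\<in>S. f x < a}"
  unfolding openin_euclidean_subtopology_iff
proof safe
  fix x assume "x \<in> S" "f x < a"
  with assms obtain d where "d > 0" "\<forall>y\<in>S. dist y x < d \<longrightarrow> f y < f x + (a - f x)"
    unfolding usc_on_def by (meson diff_gt_0_iff_gt)
  then show "\<exists>e>0. \<forall>y\<in>S. dist y x < e \<longrightarrow> y \<in> {x \<in> S. f x < a}"
    by auto
qed

lemma usc_on_attains_sup:
  fixes f :: "'a::metric_space \<Rightarrow> real"
  assumes "compact S" "S \<noteq> {}" "usc_on S f"
  shows "\<exists>x\<in>S. \<forall>y\<in>S. f y \<le> f x"
proof (rule ccontr)
  define below where "below z = {y\<in>S. f y < f z}" for z
  assume "\<not> ?thesis"
  then have "S \<subseteq> \<Union>(below ` S)"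
    by (force simp: below_def not_le)
  moreover have "\<forall>U\<in>below ` S. openin (top_of_set S) U"
    using openin_strict_sublevel_if_usc_on[OF \<open>usc_on S f\<close>] by (auto simp: below_def)
  ultimately obtain Z where Z: "Z \<subseteq> S" "finite Z" "S \<subseteq> \<Union>(below ` Z)"
    using \<open>compact S\<close> by (metis compact_eq_openin_cover finite_subset_image)
  then have "Z \<noteq> {}"
    using \<open>S \<noteq> {}\<close> by auto
  then have "Max (f ` Z) \<in> f ` Z"
    using \<open>finite Z\<close> by simp
  then obtain c where c: "c \<in> Z" "f c = Max (f ` Z)"
    by (metis imageE)
  then obtain z where "z \<in> Z" "f c < f z"
    using Z by (auto simp: below_def)
  moreover have "f z \<le> f c"
    using c \<open>z \<in> Z\<close> \<open>finite Z\<close> by simp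
  ultimately show False
    by simp
qed

lemma causal_effect_None [simp]: "causal_effect Rset PR PY None = 0"
  by (simp add: causal_effect_def)

lemma causal_effect_le_iff:
  "causal_effect Rset PR PY I \<le> causal_effect Rset PR PY J
     \<longleftrightarrow> prob_outcome Rset PR PY I \<le> prob_outcome Rset PR PY J"
  by (simp add: causal_effect_def)

theorem mainTheorem1:
  fixes Rset :: "(real ^ 'n) option \<Rightarrow> 'prof set"
    and PR :: "(real ^ 'n) option \<Rightarrow> 'prof measure"
    and PY :: "'prof \<Rightarrow> real"
    and D :: "(real ^ 'n) set"
  assumes prob: "\<And>I. prob_space (PR I)"
    and Rset_meas: "\<And>I. Rset I \<in> sets (PR I)"
    and PY_meas: "\<And>I. PY \<in> borel_measurable (PR I)"
    and PY_range: "\<And>prof. 0 \<le> PY prof \<and> PY prof \<le> 1"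
    and D_ne: "D \<noteq> {}"
    and D_compact: "compact D"
    and f_usc: "usc_on D (\<lambda>p. prob_outcome Rset PR PY (Some p))"
  shows "(\<exists>I\<in>insert None (Some ` D). causal_effect Rset PR PY I \<ge> 0)
       \<and> (\<exists>pb\<in>D. \<forall>p\<in>D. causal_effect Rset PR PY (Some pb) \<ge> causal_effect Rset PR PY (Some p))"
proof
  show "\<exists>I\<in>insert None (Some ` D). causal_effect Rset PR PY I \<ge> 0"
    by simp
  obtain pb where "pb \<in> D" "\<forall>p\<in>D. prob_outcome Rset PR PY (Some p) \<le> prob_outcome Rset PR PY (Some pb)"
    using usc_on_attains_sup[OF D_compact D_ne f_usc] by blast
  then show "\<exists>pb\<in>D. \<forall>p\<in>D. causal_effect Rset PR PY (Some pb) \<ge> causal_effect Rset PR PY (Some p)"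
    by (auto simp: causal_effect_le_iff)
qed

end
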